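(* Let $s\ge1$ be an integer and let $(G,Z)$ be a plantation. Then there is a dyadic plantation $(G',Z')$ with $|G'|\le|G|$ and $|Z'|\le|Z|$ such that $n(G,Z)\le n(G',Z')$.
   Context: Graphs are finite and simple; $|G|$ is the number of vertices. Two subgraphs are anticomplete if their vertex sets are disjoint and no edge joins them. $G$ is $s\mathcal{O}$-free if no $s$ cycles of $G$ are pairwise vertex-disjoint and pairwise anticomplete. $Z\subseteq V(G)$ is cycle-hitting if every cycle of $G$ has a vertex in $Z$. A plantation is a pair $(G,Z)$ with $G$ an $s\mathcal{O}$-free graph and $Z$ cycle-hitting. $(G,Z)$ is dyadic if $Z$ is stable and every vertex of $V(G)\setminus Z$ has at most two neighbours in $Z$. $n(G,Z)$ denotes the number of induced paths $P$ of $G$ with $Z\subseteq V(P)$ and both ends of $P$ in $Z$. *)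

theory Defs
  imports Main
begin

definition graph :: "'a set \<Rightarrow> 'a set set \<Rightarrow> bool" where
  "graph V E \<longleftrightarrow> finite V \<and> (\<forall>e\<in>E. \<exists>u v. u \<noteq> v \<and> u \<in> V \<and> v \<in> V \<and> e = {u, v})"

definition adj :: "'a set set \<Rightarrow> 'a \<Rightarrow> 'a \<Rightarrow> bool" where
  "adj E u v \<longleftrightarrow> {u, v} \<in> E"

definition is_cycle :: "'a set \<Rightarrow> 'a set set \<Rightarrow> 'a list \<Rightarrow> bool" where
  "is_cycle V E xs \<longleftrightarrow> distinct xs \<and> length xs \<ge> 3 \<and> set xs \<subseteq> V \<and>
     (\<forall>i < length xs. adj E (xs ! i) (xs ! ((i + 1) mod length xs)))"

definition anticomplete :: "'a set set \<Rightarrow> 'a set \<Rightarrow> 'a set \<Rightarrow> bool" where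
  "anticomplete E A B \<longleftrightarrow> A \<inter> B = {} \<and> (\<forall>a\<in>A. \<forall>b\<in>B. \<not> adj E a b)"

definition sO_free :: "nat \<Rightarrow> 'a set \<Rightarrow> 'a set set \<Rightarrow> bool" where
  "sO_free s V E \<longleftrightarrow> \<not> (\<exists>C :: nat \<Rightarrow> 'a list.
      (\<forall>i < s. is_cycle V E (C i)) \<and>
      (\<forall>i < s. \<forall>j < s. i \<noteq> j \<longrightarrow> anticomplete E (set (C i)) (set (C j))))"

definition cycle_hitting :: "'a set \<Rightarrow> 'a set set \<Rightarrow> 'a set \<Rightarrow> bool" where
  "cycle_hitting V E Z \<longleftrightarrow> Z \<subseteq> V \<and> (\<forall>xs. is_cycle V E xs \<longrightarrow> set xs \<inter> Z \<noteq> {})"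

definition plantation :: "nat \<Rightarrow> 'a set \<Rightarrow> 'a set set \<Rightarrow> 'a set \<Rightarrow> bool" where
  "plantation s V E Z \<longleftrightarrow> graph V E \<and> sO_free s V E \<and> cycle_hitting V E Z"

definition dyadic :: "'a set \<Rightarrow> 'a set set \<Rightarrow> 'a set \<Rightarrow> bool" where
  "dyadic V E Z \<longleftrightarrow> (\<forall>u\<in>Z. \<forall>v\<in>Z. \<not> adj E u v) \<and>
     (\<forall>v \<in> V - Z. card {z\<in>Z. adj E v z} \<le> 2)"

definition induced_path :: "'a set \<Rightarrow> 'a set set \<Rightarrow> 'a list \<Rightarrow> bool" where
  "induced_path V E xs \<longleftrightarrow> xs \<noteq> [] \<and> distinct xs \<and> set xs \<subseteq> V \<and>
     (\<forall>i < length xs. \<forall>j < length xs. adj E (xs ! i) (xs ! j) \<longleftrightarrow> (i + 1 = j \<or> j + 1 = i))"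

text \<open>n(G,Z): number of induced paths P (an induced subgraph, hence determined
  by its vertex set) with Z \<subseteq> V(P) and both ends in Z.\<close>

definition n_paths :: "'a set \<Rightarrow> 'a set set \<Rightarrow> 'a set \<Rightarrow> nat" where
  "n_paths V E Z = card {S. \<exists>xs. induced_path V E xs \<and> set xs = S \<and> Z \<subseteq> S \<and>
      hd xs \<in> Z \<and> last xs \<in> Z}"

end

theory Submission
  imports Defs
begin

text \<open>Induction on the number of vertices. If (G, Z) is not dyadic, then either two vertices
  u, v of Z are adjacent, or a vertex outside Z has at least three neighbours in Z.
  In the first case contract the edge uv into u. Every cycle of the contraction lifts to a cycle
  of G using at most the additional vertex v, so the contraction is again an sO-free plantation,
  with cycle-hitting set Z - {v}. An induced path containing Z passes through u and v
  consecutively, and deleting v from it gives such a path of the contraction; this map is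
  injective. In the second case delete the vertex: it lies on no counted path, because a vertex
  of an induced path has at most two neighbours on it.\<close>

lemma adj_commute: "adj E u v \<longleftrightarrow> adj E v u"
  unfolding adj_def by (simp add: insert_commute)

lemma graph_not_adj_self: "graph V E \<Longrightarrow> \<not> adj E u u"
  unfolding graph_def adj_def by (metis doubleton_eq_iff)

lemma is_cycle_iff_successively:
  "is_cycle V E xs \<longleftrightarrow> distinct xs \<and> length xs \<ge> 3 \<and> set xs \<subseteq> V \<and>
     successively (adj E) xs \<and> adj E (last xs) (hd xs)"
proof (cases "length xs \<ge> 3")
  case True
  then obtain m where m: "length xs = Suc m" and ne: "xs \<noteq> []"
    by (cases xs) auto
  have "(\<forall>i < Suc m. adj E (xs ! i) (xs ! (Suc i mod Suc m))) \<longleftrightarrow>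
        (\<forall>i < m. adj E (xs ! i) (xs ! Suc i)) \<and> adj E (xs ! m) (xs ! 0)"
    by (auto simp: All_less_Suc)
  then show ?thesis
    unfolding is_cycle_def successively_conv_nth
    using m by (simp add: last_conv_nth[OF ne] hd_conv_nth[OF ne])
qed (auto simp: is_cycle_def)

lemma is_cycle_rotate1:
  assumes "is_cycle V E xs"
  shows "is_cycle V E (rotate1 xs)"
proof -
  obtain x ys where xs: "xs = x # ys"
    using assms unfolding is_cycle_def by (cases xs) auto
  with assms have ys: "ys \<noteq> []"
    unfolding is_cycle_def by auto
  have "successively (adj E) (x # ys)" "adj E (last (x # ys)) x"
    using assms xs unfolding is_cycle_iff_successively by auto
  then have "successively (adj E) (ys @ [x])" "adj E (last (ys @ [x])) (hd (ys @ [x]))"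
    using ys by (auto simp: successively_append_iff successively_Cons adj_commute)
  then show ?thesis
    using assms xs unfolding is_cycle_iff_successively by auto
qed

lemma is_cycle_rotate: "is_cycle V E xs \<Longrightarrow> is_cycle V E (rotate n xs)"
  by (induction n) (auto simp: is_cycle_rotate1)

lemma is_cycle_rotate_to:
  assumes "is_cycle V E xs" "z \<in> set xs"
  obtains cs where "is_cycle V E (z # cs)" "set (z # cs) = set xs"
proof -
  obtain as bs where "xs = as @ z # bs"
    using assms(2) by (metis split_list)
  then have "rotate (length as) xs = z # bs @ as"
    by (simp add: rotate_append)
  then show ?thesis
    using that is_cycle_rotate[OF assms(1), of "length as"] by (metis set_rotate)
qed

lemma is_cycle_ConsI:
  assumes "successively (adj E) ys" "distinct ys" "length ys \<ge> 2" "set ys \<subseteq> V"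
    "x \<in> V" "x \<notin> set ys" "adj E x (hd ys)" "adj E (last ys) x"
  shows "is_cycle V E (x # ys)"
  using assms by (cases ys) (auto simp: is_cycle_iff_successively successively_Cons)

lemma is_cycle_mono:
  assumes "V' \<subseteq> V" "\<And>a b. adj E' a b \<Longrightarrow> adj E a b" "is_cycle V' E' xs"
  shows "is_cycle V E xs"
  using assms unfolding is_cycle_def by blast

lemma anticomplete_commute: "anticomplete E A B \<longleftrightarrow> anticomplete E B A"
  unfolding anticomplete_def by (metis Int_commute adj_commute)

lemma sO_free_induced_subgraph:
  assumes "V' \<subseteq> V" "\<And>a b. adj E' a b \<Longrightarrow> adj E a b"
    "\<And>a b. a \<in> V' \<Longrightarrow> b \<in> V' \<Longrightarrow> adj E a b \<Longrightarrow> adj E' a b" "sO_free s V E"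
  shows "sO_free s V' E'"
  unfolding sO_free_def
proof (intro notI, elim exE conjE)
  fix C :: "nat \<Rightarrow> 'a list"
  assume cycles: "\<forall>i < s. is_cycle V' E' (C i)"
    and apart: "\<forall>i < s. \<forall>j < s. i \<noteq> j \<longrightarrow> anticomplete E' (set (C i)) (set (C j))"
  have "\<forall>i < s. is_cycle V E (C i)"
    using cycles is_cycle_mono[OF assms(1)] assms(2) by blast
  moreover have "set (C i) \<subseteq> V'" if "i < s" for i
    using cycles that unfolding is_cycle_def by auto
  then have "\<forall>i < s. \<forall>j < s. i \<noteq> j \<longrightarrow> anticomplete E (set (C i)) (set (C j))"
    using apart assms(3) unfolding anticomplete_def by blast
  ultimately show False
    using assms(4) unfolding sO_free_def by blast
qed

lemma cycle_hitting_subgraph: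
  assumes "V' \<subseteq> V" "\<And>a b. adj E' a b \<Longrightarrow> adj E a b" "cycle_hitting V E Z" "Z \<subseteq> V'"
  shows "cycle_hitting V' E' Z"
  using assms is_cycle_mono[OF assms(1,2)] unfolding cycle_hitting_def by blast

definition Z_path_sets :: "'a set \<Rightarrow> 'a set set \<Rightarrow> 'a set \<Rightarrow> 'a set set" where
  "Z_path_sets V E Z = {S. \<exists>xs. induced_path V E xs \<and> set xs = S \<and> Z \<subseteq> S \<and>
      hd xs \<in> Z \<and> last xs \<in> Z}"

lemma n_paths_eq_card: "n_paths V E Z = card (Z_path_sets V E Z)"
  unfolding n_paths_def Z_path_sets_def ..

lemma finite_Z_path_sets: "finite V \<Longrightarrow> finite (Z_path_sets V E Z)"
  by (rule finite_subset[of _ "Pow V"]) (auto simp: Z_path_sets_def induced_path_def)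

lemma induced_path_card_neighbours:
  assumes "induced_path V E xs" "x \<in> set xs"
  shows "card {y \<in> set xs. adj E x y} \<le> 2"
proof -
  obtain i where i: "i < length xs" "xs ! i = x"
    using assms(2) by (metis in_set_conv_nth)
  have "{y \<in> set xs. adj E x y} \<subseteq> {xs ! (i - 1), xs ! (i + 1)}"
  proof
    fix y assume "y \<in> {y \<in> set xs. adj E x y}"
    then obtain j where "j < length xs" "xs ! j = y" "adj E x y"
      by (auto simp: in_set_conv_nth)
    then show "y \<in> {xs ! (i - 1), xs ! (i + 1)}"
      using assms(1) i unfolding induced_path_def by fastforce
  qed
  moreover have "card {xs ! (i - 1), xs ! (i + 1)} \<le> 2"
    by (simp add: card_insert_le_m1)
  ultimately show ?thesis
    by (meson card_mono finite.emptyI finite.insertI le_trans)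
qed

definition delete_vertex :: "'a set set \<Rightarrow> 'a \<Rightarrow> 'a set set" where
  "delete_vertex E v = {e \<in> E. v \<notin> e}"

lemma adj_delete_vertex: "adj (delete_vertex E v) a b \<longleftrightarrow> adj E a b \<and> a \<noteq> v \<and> b \<noteq> v"
  unfolding adj_def delete_vertex_def by auto

lemma plantation_delete_vertex:
  assumes "plantation s V E Z" "v \<notin> Z"
  shows "plantation s (V - {v}) (delete_vertex E v) Z"
proof -
  have G: "graph V E" "sO_free s V E" "cycle_hitting V E Z"
    using assms(1) unfolding plantation_def by auto
  have "graph (V - {v}) (delete_vertex E v)"
    using G(1) unfolding graph_def delete_vertex_def by fastforce
  moreover have "sO_free s (V - {v}) (delete_vertex E v)"
    by (intro sO_free_induced_subgraph[OF _ _ _ G(2)]) (auto simp: adj_delete_vertex)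
  moreover have "cycle_hitting (V - {v}) (delete_vertex E v) Z"
    using G(3) assms(2) by (intro cycle_hitting_subgraph[OF _ _ G(3)])
      (auto simp: adj_delete_vertex cycle_hitting_def)
  ultimately show ?thesis
    unfolding plantation_def by auto
qed

lemma Z_path_sets_delete_vertex:
  assumes "card {z \<in> Z. adj E v z} > 2"
  shows "Z_path_sets V E Z \<subseteq> Z_path_sets (V - {v}) (delete_vertex E v) Z"
proof
  fix S assume "S \<in> Z_path_sets V E Z"
  then obtain xs where xs: "induced_path V E xs" "set xs = S" "Z \<subseteq> S" "hd xs \<in> Z" "last xs \<in> Z"
    unfolding Z_path_sets_def by blast
  have "v \<notin> set xs"
  proof
    assume "v \<in> set xs"
    moreover have "card {z \<in> Z. adj E v z} \<le> card {y \<in> set xs. adj E v y}"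
      using xs(2,3) by (intro card_mono) auto
    ultimately show False
      using induced_path_card_neighbours[OF xs(1)] assms by fastforce
  qed
  then have "induced_path (V - {v}) (delete_vertex E v) xs"
    using xs(1) unfolding induced_path_def by (auto simp: adj_delete_vertex)
  then show "S \<in> Z_path_sets (V - {v}) (delete_vertex E v) Z"
    using xs unfolding Z_path_sets_def by blast
qed

lemma n_paths_delete_vertex:
  assumes "finite V" "card {z \<in> Z. adj E v z} > 2"
  shows "n_paths V E Z \<le> n_paths (V - {v}) (delete_vertex E v) Z"
  unfolding n_paths_eq_card
  using assms by (intro card_mono finite_Z_path_sets Z_path_sets_delete_vertex) auto

definition contract_edge :: "'a set set \<Rightarrow> 'a \<Rightarrow> 'a \<Rightarrow> 'a set set" where
  "contract_edge E u v = (\<lambda>e. (\<lambda>x. if x = v then u else x) ` e) ` (E - {{u, v}})"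

lemma adj_contract_edge_not_contracted:
  "u \<noteq> v \<Longrightarrow> adj (contract_edge E u v) a b \<Longrightarrow> a \<noteq> v \<and> b \<noteq> v"
  unfolding adj_def contract_edge_def by (auto simp: doubleton_eq_iff split: if_splits)

lemma adj_contract_edge_iff:
  assumes "graph V E" "u \<noteq> v" "a \<noteq> v" "b \<noteq> v"
  shows "adj (contract_edge E u v) a b \<longleftrightarrow>
    adj E a b \<or> (a = u \<and> b \<noteq> u \<and> adj E v b) \<or> (b = u \<and> a \<noteq> u \<and> adj E a v)"
proof
  let ?m = "\<lambda>x. if x = v then u else x"
  assume "adj (contract_edge E u v) a b"
  then obtain e where e: "e \<in> E" "e \<noteq> {u, v}" "{a, b} = ?m ` e"
    unfolding adj_def contract_edge_def by auto
  obtain x y where xy: "x \<noteq> y" "e = {x, y}"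
    using assms(1) e(1) unfolding graph_def by blast
  have "{a, b} = {?m x, ?m y}"
    using e(3) xy(2) by simp
  then consider "x = v" "y \<noteq> u" "{a, b} = {u, y}" | "y = v" "x \<noteq> u" "{a, b} = {x, u}"
    | "{a, b} = {x, y}"
    using e(2) xy by (auto split: if_splits)
  then show "adj E a b \<or> (a = u \<and> b \<noteq> u \<and> adj E v b) \<or> (b = u \<and> a \<noteq> u \<and> adj E a v)"
    using e(1) xy(2) unfolding adj_def by cases (auto simp: doubleton_eq_iff insert_commute)
next
  assume "adj E a b \<or> (a = u \<and> b \<noteq> u \<and> adj E v b) \<or> (b = u \<and> a \<noteq> u \<and> adj E a v)"
  then obtain e where "e \<in> E" "e \<noteq> {u, v}" "{a, b} = (\<lambda>x. if x = v then u else x) ` e"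
    using assms(2-4) unfolding adj_def by (auto simp: doubleton_eq_iff)
  then show "adj (contract_edge E u v) a b"
    unfolding adj_def contract_edge_def by blast
qed

lemma adj_of_adj_contract_edge:
  assumes "graph V E" "u \<noteq> v" "adj (contract_edge E u v) a b" "a \<noteq> u" "b \<noteq> u"
  shows "adj E a b"
  using assms adj_contract_edge_iff[OF assms(1,2)] adj_contract_edge_not_contracted[OF assms(2)]
  by blast

lemma graph_contract_edge:
  assumes "graph V E" "u \<in> V" "u \<noteq> v"
  shows "graph (V - {v}) (contract_edge E u v)"
  unfolding graph_def
proof (intro conjI ballI)
  show "finite (V - {v})"
    using assms(1) unfolding graph_def by auto
  let ?m = "\<lambda>x. if x = v then u else x"
  fix e' assume "e' \<in> contract_edge E u v"
  then obtain e where e: "e \<in> E" "e \<noteq> {u, v}" "e' = ?m ` e"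
    unfolding contract_edge_def by auto
  obtain x y where xy: "x \<noteq> y" "x \<in> V" "y \<in> V" "e = {x, y}"
    using assms(1) e(1) unfolding graph_def by blast
  have "?m x \<noteq> ?m y" "?m x \<in> V - {v}" "?m y \<in> V - {v}"
    using xy e(2) assms(2,3) by auto
  moreover have "e' = {?m x, ?m y}"
    using e(3) xy(4) by (simp only: image_insert image_empty)
  ultimately show "\<exists>x y. x \<noteq> y \<and> x \<in> V - {v} \<and> y \<in> V - {v} \<and> e' = {x, y}"
    by blast
qed

lemma is_cycle_contract_edge_avoiding:
  assumes "graph V E" "u \<noteq> v" "is_cycle (V - {v}) (contract_edge E u v) C" "u \<notin> set C"
  shows "is_cycle V E C"
proof -
  have "C \<noteq> []"
    using assms(3) unfolding is_cycle_def by auto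
  then have "hd C \<in> set C" "last C \<in> set C"
    by auto
  then show ?thesis
    using assms(3,4) adj_of_adj_contract_edge[OF assms(1,2)] unfolding is_cycle_iff_successively
    by (auto intro: successively_mono)
qed

lemma is_cycle_contract_edge_through:
  assumes G: "graph V E" and uv: "u \<in> V" "v \<in> V" "u \<noteq> v" "adj E u v"
    and C: "is_cycle (V - {v}) (contract_edge E u v) (u # cs)"
  obtains D where "is_cycle V E D" "set D \<subseteq> {u, v} \<union> set cs"
proof -
  let ?E' = "contract_edge E u v"
  have cs: "distinct cs" "length cs \<ge> 2" "set cs \<subseteq> V" "u \<notin> set cs" "v \<notin> set cs"
    and first: "adj ?E' u (hd cs)" and last: "adj ?E' (last cs) u"
    and path: "successively (adj ?E') cs"
    using C unfolding is_cycle_iff_successively by (auto simp: successively_Cons split: if_splits)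
  have "cs \<noteq> []"
    using cs(2) by auto
  then have ends: "hd cs \<in> set cs" "last cs \<in> set cs"
    by auto
  have "successively (adj E) cs"
    using path cs(4) adj_of_adj_contract_edge[OF G uv(3)] by (auto intro: successively_mono)
  note close = is_cycle_ConsI[OF this cs(1,2,3)]
  \<comment> \<open>Close the path through the vertices of {u, v} its ends attach to, via uv if they differ.\<close>
  have "adj E u (hd cs) \<or> adj E v (hd cs)"
    using first adj_contract_edge_iff[OF G uv(3), of u "hd cs"] ends cs(5) uv(3) by auto
  then obtain x where x: "x \<in> {u, v}" "adj E x (hd cs)"
    by blast
  have "adj E (last cs) u \<or> adj E (last cs) v"
    using last adj_contract_edge_iff[OF G uv(3), of "last cs" u] ends cs(5) uv(3) by auto
  then obtain y where y: "y \<in> {u, v}" "adj E (last cs) y"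
    by blast
  show thesis
  proof (cases "x = y")
    case True
    then have "is_cycle V E (x # cs)"
      using close x y uv cs by auto
    moreover have "set (x # cs) \<subseteq> {u, v} \<union> set cs"
      using x by auto
    ultimately show thesis
      using that by blast
  next
    case False
    then have "adj E y x"
      using x y uv(4) adj_commute by fastforce
    then have "is_cycle V E (x # cs @ [y])"
      using is_cycle_ConsI[of E "cs @ [y]" V x] x y uv cs False \<open>cs \<noteq> []\<close>
      by (auto simp: successively_append_iff \<open>successively (adj E) cs\<close>)
    moreover have "set (x # cs @ [y]) \<subseteq> {u, v} \<union> set cs"
      using x y by auto
    ultimately show thesis
      using that by blast
  qed
qed

lemma contract_edge_cycle_lift:
  assumes G: "graph V E" and uv: "u \<in> V" "v \<in> V" "u \<noteq> v" "adj E u v"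
    and C: "is_cycle (V - {v}) (contract_edge E u v) C"
  shows "\<exists>D. is_cycle V E D \<and> set D \<subseteq> set C \<union> {v} \<and> (u \<notin> set C \<longrightarrow> D = C)"
proof (cases "u \<in> set C")
  case True
  then obtain cs where cs: "is_cycle (V - {v}) (contract_edge E u v) (u # cs)" "set (u # cs) = set C"
    using is_cycle_rotate_to[OF C] by blast
  obtain D where "is_cycle V E D" "set D \<subseteq> {u, v} \<union> set cs"
    using is_cycle_contract_edge_through[OF G uv cs(1)] .
  moreover have "{u, v} \<union> set cs = set C \<union> {v}"
    using cs(2) by auto
  ultimately show ?thesis
    using True by blast
next
  case False
  then show ?thesis
    using is_cycle_contract_edge_avoiding[OF G uv(3) C] by blast
qed

lemma anticomplete_contract_edge_lift:
  assumes G: "graph V E" and "u \<noteq> v"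
    and apart: "anticomplete (contract_edge E u v) A B"
    and "v \<notin> A" "v \<notin> B" "u \<notin> B" "A' \<subseteq> A \<union> {v}" "u \<notin> A \<Longrightarrow> A' = A"
  shows "anticomplete E A' B"
  unfolding anticomplete_def
proof (intro conjI ballI notI)
  show "A' \<inter> B = {}"
    using apart assms(5,7) unfolding anticomplete_def by blast
next
  fix a b assume ab: "a \<in> A'" "b \<in> B" and "adj E a b"
  have "b \<noteq> u" "b \<noteq> v"
    using ab assms(5,6) by auto
  show False
  proof (cases "a = v")
    case True
    then have "u \<in> A" "adj (contract_edge E u v) u b"
      using ab assms(2,4,8) \<open>adj E a b\<close> \<open>b \<noteq> u\<close> \<open>b \<noteq> v\<close>
        adj_contract_edge_iff[OF G assms(2), of u b]
      by auto
    then show False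
      using apart ab unfolding anticomplete_def by blast
  next
    case False
    then have "a \<in> A" "adj (contract_edge E u v) a b"
      using ab assms(7) \<open>adj E a b\<close> \<open>b \<noteq> v\<close> adj_contract_edge_iff[OF G assms(2)] by auto
    then show False
      using apart ab unfolding anticomplete_def by blast
  qed
qed

lemma sO_free_contract_edge:
  assumes G: "graph V E" and uv: "u \<in> V" "v \<in> V" "u \<noteq> v" "adj E u v"
    and "sO_free s V E"
  shows "sO_free s (V - {v}) (contract_edge E u v)"
  unfolding sO_free_def
proof (intro notI, elim exE conjE)
  let ?E' = "contract_edge E u v"
  fix C :: "nat \<Rightarrow> 'a list"
  assume cycles: "\<forall>i < s. is_cycle (V - {v}) ?E' (C i)"
    and apart: "\<forall>i < s. \<forall>j < s. i \<noteq> j \<longrightarrow> anticomplete ?E' (set (C i)) (set (C j))"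
  have "\<forall>i. \<exists>D. i < s \<longrightarrow>
      is_cycle V E D \<and> set D \<subseteq> set (C i) \<union> {v} \<and> (u \<notin> set (C i) \<longrightarrow> D = C i)"
    using cycles contract_edge_cycle_lift[OF G uv] by blast
  then obtain D where D: "\<forall>i. i < s \<longrightarrow>
      is_cycle V E (D i) \<and> set (D i) \<subseteq> set (C i) \<union> {v} \<and> (u \<notin> set (C i) \<longrightarrow> D i = C i)"
    by (rule choice[THEN exE])
  \<comment> \<open>At most one of the cycles contains u, and the lift leaves all others unchanged.\<close>
  have lifted_apart: "anticomplete E (set (D i)) (set (D j))"
    if ij: "i < s" "j < s" "i \<noteq> j" "u \<notin> set (C j)" for i j
  proof -
    have "v \<notin> set (C i)" "v \<notin> set (C j)"
      using cycles ij(1,2) unfolding is_cycle_def by auto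
    moreover have "set (D i) \<subseteq> set (C i) \<union> {v}" "u \<notin> set (C i) \<Longrightarrow> set (D i) = set (C i)"
      "D j = C j"
      using D ij by auto
    moreover have "anticomplete ?E' (set (C i)) (set (C j))"
      using apart ij by blast
    ultimately show ?thesis
      using anticomplete_contract_edge_lift[OF G uv(3)] ij(4) by metis
  qed
  have "\<forall>i < s. \<forall>j < s. i \<noteq> j \<longrightarrow> anticomplete E (set (D i)) (set (D j))"
  proof (intro allI impI)
    fix i j assume ij: "i < s" "j < s" "i \<noteq> j"
    have "u \<notin> set (C i) \<or> u \<notin> set (C j)"
      using apart ij unfolding anticomplete_def by blast
    then show "anticomplete E (set (D i)) (set (D j))"
      using lifted_apart[OF ij] lifted_apart[of j i] ij anticomplete_commute by blast
  qed
  then show False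
    using D \<open>sO_free s V E\<close> unfolding sO_free_def by blast
qed

lemma cycle_hitting_contract_edge:
  assumes G: "graph V E" and uv: "u \<in> Z" "v \<in> Z" "u \<noteq> v" "adj E u v"
    and "cycle_hitting V E Z"
  shows "cycle_hitting (V - {v}) (contract_edge E u v) (Z - {v})"
  unfolding cycle_hitting_def
proof (intro conjI allI impI notI)
  show "Z - {v} \<subseteq> V - {v}"
    using \<open>cycle_hitting V E Z\<close> unfolding cycle_hitting_def by auto
next
  fix C assume C: "is_cycle (V - {v}) (contract_edge E u v) C" "set C \<inter> (Z - {v}) = {}"
  then have "u \<notin> set C"
    using uv(1,3) by blast
  then have "is_cycle V E C"
    using is_cycle_contract_edge_avoiding[OF G uv(3) C(1)] by blast
  moreover have "v \<notin> set C"
    using C(1) unfolding is_cycle_def by auto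
  ultimately show False
    using C(2) \<open>cycle_hitting V E Z\<close> unfolding cycle_hitting_def by blast
qed

lemma plantation_contract_edge:
  assumes "plantation s V E Z" "u \<in> Z" "v \<in> Z" "adj E u v"
  shows "plantation s (V - {v}) (contract_edge E u v) (Z - {v})"
proof -
  have G: "graph V E" "sO_free s V E" "cycle_hitting V E Z"
    using assms(1) unfolding plantation_def by auto
  then have uv: "u \<in> V" "v \<in> V"
    using assms(2,3) unfolding cycle_hitting_def by auto
  have "u \<noteq> v"
    using graph_not_adj_self[OF G(1)] assms(4) by blast
  then show ?thesis
    unfolding plantation_def
    using graph_contract_edge[OF G(1) uv(1)] sO_free_contract_edge[OF G(1) uv _ assms(4) G(2)]
      cycle_hitting_contract_edge[OF G(1) assms(2,3) _ assms(4) G(3)]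
    by blast
qed

lemma hd_last_remove_next_to:
  assumes xs: "xs = as @ v # bs" and q: "q < length xs" "xs ! q = u"
    and next_to: "q + 1 = length as \<or> length as + 1 = q"
  shows "hd (as @ bs) \<in> {hd xs, u}" "last (as @ bs) \<in> {last xs, u}"
proof -
  show "hd (as @ bs) \<in> {hd xs, u}"
  proof (cases "as = []")
    case True
    then have "q = 1" "bs \<noteq> []"
      using next_to q(1) xs by auto
    then show ?thesis
      using q(2) xs True by (simp add: hd_conv_nth)
  qed (simp add: xs)
  show "last (as @ bs) \<in> {last xs, u}"
  proof (cases "bs = []")
    case True
    then have "Suc q = length as"
      using next_to q(1) xs by auto
    then have "as \<noteq> []" "length as - 1 = q" "q < length as"
      by auto
    then have "last as = u"
      using q xs by (simp add: last_conv_nth nth_append)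
    then show ?thesis
      using True by simp
  qed (simp add: xs)
qed

text \<open>Here a, b are positions in a path from which position p has been removed, and i, j are
  the corresponding positions in the original path; the left-hand side is the adjacency of
  positions i and j in the contraction, as computed in adj_contract_edge_on_induced_path.\<close>

lemma adjacent_after_removal_iff:
  fixes a b p q :: nat
  assumes "q + 1 = p \<or> p + 1 = q" "a \<noteq> b"
  defines "i \<equiv> if a < p then a else Suc a" and "j \<equiv> if b < p then b else Suc b"
  shows "((i + 1 = j \<or> j + 1 = i) \<or> (i = q \<and> j \<noteq> q \<and> (p + 1 = j \<or> j + 1 = p)) \<or>
          (j = q \<and> i \<noteq> q \<and> (i + 1 = p \<or> p + 1 = i))) \<longleftrightarrow> (a + 1 = b \<or> b + 1 = a)"
  using assms(1,2) unfolding i_def j_def by auto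

lemma adj_contract_edge_on_induced_path:
  assumes G: "graph V E" and "u \<noteq> v" and P: "induced_path V E xs"
    and p: "p < length xs" "xs ! p = v" and q: "q < length xs" "xs ! q = u"
    and ij: "i < length xs" "j < length xs" "i \<noteq> p" "j \<noteq> p"
  shows "adj (contract_edge E u v) (xs ! i) (xs ! j) \<longleftrightarrow>
    (i + 1 = j \<or> j + 1 = i) \<or> (i = q \<and> j \<noteq> q \<and> (p + 1 = j \<or> j + 1 = p)) \<or>
    (j = q \<and> i \<noteq> q \<and> (i + 1 = p \<or> p + 1 = i))"
proof -
  have adj_xs: "\<And>i j. i < length xs \<Longrightarrow> j < length xs \<Longrightarrow>
      adj E (xs ! i) (xs ! j) \<longleftrightarrow> (i + 1 = j \<or> j + 1 = i)"
    using P unfolding induced_path_def by auto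
  have nth_eq: "xs ! k = xs ! l \<longleftrightarrow> k = l" if "k < length xs" "l < length xs" for k l
    using P that unfolding induced_path_def by (simp add: nth_eq_iff_index_eq)
  have "xs ! i \<noteq> v" "xs ! j \<noteq> v"
    using nth_eq[OF ij(1) p(1)] nth_eq[OF ij(2) p(1)] ij(3,4) p(2) by auto
  then have "adj (contract_edge E u v) (xs ! i) (xs ! j) \<longleftrightarrow> adj E (xs ! i) (xs ! j) \<or>
       (xs ! i = u \<and> xs ! j \<noteq> u \<and> adj E v (xs ! j)) \<or>
       (xs ! j = u \<and> xs ! i \<noteq> u \<and> adj E (xs ! i) v)"
    by (rule adj_contract_edge_iff[OF G \<open>u \<noteq> v\<close>])
  moreover have "xs ! i = u \<longleftrightarrow> i = q" "xs ! j = u \<longleftrightarrow> j = q"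
    using nth_eq[OF ij(1) q(1)] nth_eq[OF ij(2) q(1)] q(2) by auto
  moreover have "adj E v (xs ! j) \<longleftrightarrow> p + 1 = j \<or> j + 1 = p"
    "adj E (xs ! i) v \<longleftrightarrow> i + 1 = p \<or> p + 1 = i"
    using adj_xs[OF p(1) ij(2)] adj_xs[OF ij(1) p(1)] p(2) by auto
  ultimately show ?thesis
    using adj_xs[OF ij(1,2)] by (simp only:)
qed

lemma induced_path_contract_edge:
  assumes G: "graph V E" and uv: "u \<noteq> v" "adj E u v"
    and P: "induced_path V E xs" and "u \<in> set xs" "v \<in> set xs"
  obtains ys where "induced_path (V - {v}) (contract_edge E u v) ys" "set ys = set xs - {v}"
    "hd ys \<in> {hd xs, u}" "last ys \<in> {last xs, u}"
proof -
  let ?E' = "contract_edge E u v"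
  have xs_distinct: "distinct xs" and xs_V: "set xs \<subseteq> V"
    using P unfolding induced_path_def by auto
  obtain as bs where xs: "xs = as @ v # bs"
    using \<open>v \<in> set xs\<close> by (metis split_list)
  define p where "p = length as"
  define shift where "shift k = (if k < p then k else Suc k)" for k
  define ys where "ys = as @ bs"
  have p: "p < length xs" "xs ! p = v"
    unfolding p_def xs by auto
  obtain q where q: "q < length xs" "xs ! q = u"
    using \<open>u \<in> set xs\<close> by (metis in_set_conv_nth)
  have pq: "q + 1 = p \<or> p + 1 = q"
    using P p q uv(2) unfolding induced_path_def by blast
  have ys_nth: "ys ! k = xs ! shift k" "shift k < length xs" "shift k \<noteq> p"
    if "k < length ys" for k
    using that unfolding ys_def shift_def p_def xs by (auto simp: nth_append)
  have ys_set: "set ys = set xs - {v}" and ys_distinct: "distinct ys"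
    using xs_distinct unfolding xs ys_def by auto
  have ys_adj: "adj ?E' (ys ! a) (ys ! b) \<longleftrightarrow> (a + 1 = b \<or> b + 1 = a)"
    if ab: "a < length ys" "b < length ys" for a b
  proof (cases "a = b")
    case True
    then show ?thesis
      using graph_not_adj_self[OF graph_contract_edge[OF G _ uv(1)]] \<open>u \<in> set xs\<close> xs_V by auto
  next
    case False
    have "shift a < length xs" "shift b < length xs" "shift a \<noteq> p" "shift b \<noteq> p"
      using ys_nth(2,3) ab by auto
    then show ?thesis
      using adj_contract_edge_on_induced_path[OF G uv(1) P p q]
        adjacent_after_removal_iff[OF pq False] ys_nth(1)[OF ab(1)] ys_nth(1)[OF ab(2)]
      unfolding shift_def by simp
  qed
  have "ys \<noteq> []" "set ys \<subseteq> V - {v}"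
    using \<open>u \<in> set xs\<close> uv(1) ys_set xs_V by auto
  then have "induced_path (V - {v}) ?E' ys"
    unfolding induced_path_def using ys_distinct ys_adj by blast
  moreover have "hd ys \<in> {hd xs, u}" "last ys \<in> {last xs, u}"
    using hd_last_remove_next_to[OF xs q] pq unfolding ys_def p_def by auto
  ultimately show thesis
    using that ys_set by blast
qed

lemma n_paths_contract_edge:
  assumes G: "graph V E" and uv: "u \<in> Z" "v \<in> Z" "adj E u v"
  shows "n_paths V E Z \<le> n_paths (V - {v}) (contract_edge E u v) (Z - {v})"
  unfolding n_paths_eq_card
proof (rule card_inj_on_le)
  show "inj_on (\<lambda>S. S - {v}) (Z_path_sets V E Z)"
  proof (rule inj_onI)
    fix S T assume "S \<in> Z_path_sets V E Z" "T \<in> Z_path_sets V E Z" "S - {v} = T - {v}"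
    moreover from this(1,2) have "v \<in> S" "v \<in> T"
      using uv(2) unfolding Z_path_sets_def by auto
    ultimately show "S = T"
      by blast
  qed
  show "finite (Z_path_sets (V - {v}) (contract_edge E u v) (Z - {v}))"
    using G unfolding graph_def by (simp add: finite_Z_path_sets)
  have "u \<noteq> v"
    using graph_not_adj_self[OF G] uv(3) by blast
  show "(\<lambda>S. S - {v}) ` Z_path_sets V E Z \<subseteq> Z_path_sets (V - {v}) (contract_edge E u v) (Z - {v})"
  proof (rule image_subsetI)
    fix S assume "S \<in> Z_path_sets V E Z"
    then obtain xs where xs: "induced_path V E xs" "set xs = S" "Z \<subseteq> S" "hd xs \<in> Z" "last xs \<in> Z"
      unfolding Z_path_sets_def by blast
    have "u \<in> set xs" "v \<in> set xs"
      using xs(2,3) uv(1,2) by auto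
    then obtain ys where ys: "induced_path (V - {v}) (contract_edge E u v) ys"
      "set ys = set xs - {v}" "hd ys \<in> {hd xs, u}" "last ys \<in> {last xs, u}"
      by (rule induced_path_contract_edge[OF G \<open>u \<noteq> v\<close> uv(3) xs(1)])
    have "hd ys \<in> set ys" "last ys \<in> set ys"
      using ys(1) unfolding induced_path_def by auto
    then have "hd ys \<noteq> v" "last ys \<noteq> v"
      using ys(2) by auto
    moreover have "hd ys \<in> Z" "last ys \<in> Z"
      using ys(3,4) xs(4,5) uv(1) by auto
    ultimately have "hd ys \<in> Z - {v}" "last ys \<in> Z - {v}"
      by auto
    moreover have "set ys = S - {v}" "Z - {v} \<subseteq> S - {v}"
      using ys(2) xs(2,3) by auto
    ultimately show "S - {v} \<in> Z_path_sets (V - {v}) (contract_edge E u v) (Z - {v})"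
      unfolding Z_path_sets_def using ys(1) by blast
  qed
qed

lemma plantation_non_dyadic_step:
  fixes V :: "'a set"
  assumes P: "plantation s V E Z" and "\<not> dyadic V E Z"
  shows "\<exists>(V1 :: 'a set) E1 Z1. plantation s V1 E1 Z1 \<and>
           card V1 < card V \<and> card Z1 \<le> card Z \<and> n_paths V E Z \<le> n_paths V1 E1 Z1"
proof -
  have G: "graph V E" and "Z \<subseteq> V"
    using P unfolding plantation_def cycle_hitting_def by auto
  then have "finite V"
    unfolding graph_def by simp
  consider (Z_edge) u v where "u \<in> Z" "v \<in> Z" "adj E u v"
    | (Z_rich) v where "v \<in> V" "v \<notin> Z" "card {z \<in> Z. adj E v z} > 2"
    using \<open>\<not> dyadic V E Z\<close> unfolding dyadic_def by (auto simp: not_le)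
  then show ?thesis
  proof cases
    case (Z_edge u v)
    have "card (V - {v}) < card V"
      using \<open>finite V\<close> \<open>Z \<subseteq> V\<close> Z_edge(2) by (meson card_Diff1_less subsetD)
    then show ?thesis
      using plantation_contract_edge[OF P Z_edge] n_paths_contract_edge[OF G Z_edge]
        card_Diff1_le[of Z v] by blast
  next
    case (Z_rich v)
    have "card (V - {v}) < card V"
      using \<open>finite V\<close> Z_rich(1) by (rule card_Diff1_less)
    then show ?thesis
      using plantation_delete_vertex[OF P Z_rich(2)] n_paths_delete_vertex[OF \<open>finite V\<close> Z_rich(3)]
      by blast
  qed
qed

lemma plantation_dyadic_reduction:
  fixes V :: "'a set"
  assumes "plantation s V E Z"
  shows "\<exists>(V' :: 'a set) E' Z'. plantation s V' E' Z' \<and> dyadic V' E' Z' \<and>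
           card V' \<le> card V \<and> card Z' \<le> card Z \<and> n_paths V E Z \<le> n_paths V' E' Z'"
  using assms
proof (induction "card V" arbitrary: V E Z rule: less_induct)
  case less
  show ?case
  proof (cases "dyadic V E Z")
    case True
    then show ?thesis
      using less.prems by blast
  next
    case False
    then obtain V1 :: "'a set" and E1 Z1 where step: "plantation s V1 E1 Z1" "card V1 < card V"
      "card Z1 \<le> card Z" "n_paths V E Z \<le> n_paths V1 E1 Z1"
      using plantation_non_dyadic_step[OF less.prems] by blast
    from less.hyps[OF step(2,1)] obtain V' :: "'a set" and E' Z' where reduced:
      "plantation s V' E' Z'" "dyadic V' E' Z'" "card V' \<le> card V1" "card Z' \<le> card Z1"
      "n_paths V1 E1 Z1 \<le> n_paths V' E' Z'"
      by blast
    have "card V' \<le> card V" "card Z' \<le> card Z" "n_paths V E Z \<le> n_paths V' E' Z'"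
      using reduced(3-5) step(2-4) by linarith+
    then show ?thesis
      using reduced(1,2) by blast
  qed
qed

theorem mainTheorem16:
  fixes s :: nat and V Z :: "'a set" and E :: "'a set set"
  assumes "s \<ge> 1" and "plantation s V E Z"
  shows "\<exists>(V' :: 'a set) (E' :: 'a set set) (Z' :: 'a set). plantation s V' E' Z' \<and> dyadic V' E' Z' \<and>
           card V' \<le> card V \<and> card Z' \<le> card Z \<and>
           n_paths V E Z \<le> n_paths V' E' Z'"
  using plantation_dyadic_reduction[OF assms(2)] .

end
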